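(* Let $\Sigma\in\mathbb{R}^{d\times d}$ be a fixed positive definite matrix, let $x_1,\dots,x_n$ be i.i.d. $\mathcal{N}(0,\Sigma)$ forming the columns of $X$, and let $\mathcal{M}$ be a (possibly randomized, measurable) mechanism with $0\preceq\mathcal{M}(X)\preceq\beta_u I$ always, for a constant $\beta_u>0$. Set $\gamma=1+\beta_u/\lambda_{\min}(\Sigma)$. Then for every $i\in[n]$ and every $T\ge 6\gamma d^{3/2}$, $$\int_T^\infty \Pr\big[\,|\mathcal{A}(x_i,\mathcal{M}(X))|\ge t\,\big]\,dt\ \le\ 9\gamma\sqrt d\,\exp\Big(-\frac{T}{9\gamma\sqrt d}\Big).$$
   Context: For $z\in\mathbb{R}^d$ and a matrix $M$, $\mathcal{A}(z,M)=\langle M-\Sigma,\ \tfrac12(\Sigma^{-1}zz^{\top}\Sigma^{-1}-\Sigma^{-1})\rangle$ with $\langle A,B\rangle=\mathrm{Tr}(A^\top B)$ (the gradient with respect to $\Sigma$ of $\ln$ of the $\mathcal{N}(0,\Sigma)$ density at $z$). $\lambda_{\min}$ denotes the smallest eigenvalue; $\preceq$ is the Loewner order. Probabilities are over $X$ and the randomness of $\mathcal{M}$, with $\Sigma$ fixed. *)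

theory Defs
  imports "HOL-Analysis.Analysis" "HOL-Probability.Probability"
begin

definition sym_mat :: "real^'d^'d \<Rightarrow> bool" where
  "sym_mat A \<longleftrightarrow> transpose A = A"

definition pos_def :: "real^'d^'d \<Rightarrow> bool" where
  "pos_def A \<longleftrightarrow> sym_mat A \<and> (\<forall>v. v \<noteq> 0 \<longrightarrow> v \<bullet> (A *v v) > 0)"

definition psd :: "real^'d^'d \<Rightarrow> bool" where
  "psd A \<longleftrightarrow> sym_mat A \<and> (\<forall>v. v \<bullet> (A *v v) \<ge> 0)"

definition loewner_le :: "real^'d^'d \<Rightarrow> real^'d^'d \<Rightarrow> bool" where
  "loewner_le A B \<longleftrightarrow> psd (B - A)"

definition real_eigenvalues :: "real^'d^'d \<Rightarrow> real set" where
  "real_eigenvalues A = {l. \<exists>v. v \<noteq> 0 \<and> A *v v = l *\<^sub>R v}"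

definition lambda_min :: "real^'d^'d \<Rightarrow> real" where
  "lambda_min A = Min (real_eigenvalues A)"

definition frob_inner :: "real^'d^'d \<Rightarrow> real^'d^'d \<Rightarrow> real" where
  "frob_inner A B = trace (transpose A ** B)"

definition outer :: "real^'d \<Rightarrow> real^'d \<Rightarrow> real^'d^'d" where
  "outer u v = (\<chi> i j. u $ i * v $ j)"

definition score :: "real^'d^'d \<Rightarrow> real^'d \<Rightarrow> real^'d^'d \<Rightarrow> real" where
  "score \<Sigma> z M = frob_inner (M - \<Sigma>)
     ((1/2) *\<^sub>R (matrix_inv \<Sigma> ** outer z z ** matrix_inv \<Sigma> - matrix_inv \<Sigma>))"

definition mvn_density :: "real^'d^'d \<Rightarrow> real^'d \<Rightarrow> real" where
  "mvn_density \<Sigma> z =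
     exp (- (z \<bullet> (matrix_inv \<Sigma> *v z)) / 2) / sqrt ((2 * pi) ^ CARD('d) * det \<Sigma>)"

end

theory Submission
  imports Defs
begin

(* Since 0 <= M <= beta I and Sigma >= lambda_min(Sigma) I, the score is bounded pointwise:
   |A(z, M)| <= gamma/2 (z' Sigma^-1 z + d).  For x ~ N(0, Sigma) the density times
   exp(x' Sigma^-1 x / 4) is the density evaluated at x / sqrt 2, so E exp(Q/4) = 2^(d/2) for
   Q = x' Sigma^-1 x, and Chernoff gives P(Q >= s) <= 2^(d/2) exp(-s/4).  For t >= 6 gamma d this
   makes P(|A| >= t) <= exp(-t / (9 gamma sqrt d)), and integrating this over [T, oo) gives the
   bound. *)

lemma sym_mat_inner_commute:
  fixes A :: "real^'d^'d"
  assumes "sym_mat A"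
  shows "x \<bullet> (A *v y) = (A *v x) \<bullet> y"
proof -
  have "x \<bullet> (A *v y) = (x v* A) \<bullet> y" by (simp add: dot_lmul_matrix)
  also have "x v* A = A *v x"
    using assms unfolding sym_mat_def by (metis vector_transpose_matrix)
  finally show ?thesis .
qed

lemma pos_def_matrix_inv:
  fixes S :: "real^'d^'d"
  assumes "pos_def S"
  shows "S ** matrix_inv S = mat 1" and "matrix_inv S ** S = mat 1"
proof -
  have "\<forall>x. S *v x = 0 \<longrightarrow> x = 0"
    using assms unfolding pos_def_def by (metis inner_zero_right less_irrefl)
  then have "invertible S"
    using matrix_left_invertible_ker invertible_left_inverse by blast
  then have "\<exists>A'. S ** A' = mat 1 \<and> A' ** S = mat 1" unfolding invertible_def by blast
  then have "S ** matrix_inv S = mat 1 \<and> matrix_inv S ** S = mat 1"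
    unfolding matrix_inv_def by (rule someI_ex)
  then show "S ** matrix_inv S = mat 1" "matrix_inv S ** S = mat 1" by auto
qed

lemma pos_def_mult_matrix_inv_vector:
  fixes S :: "real^'d^'d"
  assumes "pos_def S"
  shows "S *v (matrix_inv S *v v) = v"
  by (simp add: matrix_vector_mul_assoc pos_def_matrix_inv(1)[OF assms])

lemma sym_mat_matrix_inv:
  fixes S :: "real^'d^'d"
  assumes "pos_def S"
  shows "sym_mat (matrix_inv S)"
proof -
  have "transpose S = S" using assms unfolding pos_def_def sym_mat_def by auto
  then have left_inv: "transpose (matrix_inv S) ** S = mat 1"
    by (metis matrix_transpose_mul pos_def_matrix_inv(1)[OF assms] transpose_mat)
  have "transpose (matrix_inv S) = transpose (matrix_inv S) ** (S ** matrix_inv S)"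
    by (simp add: pos_def_matrix_inv(1)[OF assms])
  also have "\<dots> = matrix_inv S"
    by (simp add: left_inv matrix_mul_assoc)
  finally show ?thesis unfolding sym_mat_def .
qed

lemma finite_real_eigenvalues:
  fixes A :: "real^'d^'d"
  assumes "sym_mat A"
  shows "finite (real_eigenvalues A)"
proof -
  let ?E = "real_eigenvalues A"
  define ev where "ev l = (SOME v. v \<noteq> 0 \<and> A *v v = l *\<^sub>R v)" for l
  have ev: "ev l \<noteq> 0 \<and> A *v ev l = l *\<^sub>R ev l" if "l \<in> ?E" for l
    unfolding ev_def by (rule someI_ex) (use that in \<open>auto simp: real_eigenvalues_def\<close>)
  have inj: "inj_on ev ?E"
  proof
    fix a b assume a: "a \<in> ?E" and b: "b \<in> ?E" and "ev a = ev b"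
    then have "a *\<^sub>R ev a = b *\<^sub>R ev a" using ev[OF a] ev[OF b] by metis
    then show "a = b" using ev[OF a] by simp
  qed
  \<comment> \<open>eigenvectors of a symmetric matrix for distinct eigenvalues are orthogonal\<close>
  have "pairwise orthogonal (ev ` ?E)"
  proof (clarsimp simp: pairwise_def)
    fix a b assume a: "a \<in> ?E" and b: "b \<in> ?E" and "ev a \<noteq> ev b"
    then have "a \<noteq> b" by auto
    have "ev a \<bullet> (A *v ev b) = (A *v ev a) \<bullet> ev b"
      by (rule sym_mat_inner_commute[OF assms])
    then have "b * (ev a \<bullet> ev b) = a * (ev a \<bullet> ev b)" using ev[OF a] ev[OF b] by simp
    then show "orthogonal (ev a) (ev b)" using \<open>a \<noteq> b\<close> unfolding orthogonal_def by simp
  qed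
  then have "finite (ev ` ?E)" by (rule pairwise_orthogonal_imp_finite)
  then show ?thesis using inj finite_imageD by blast
qed

lemma real_eigenvalue_pos:
  fixes S :: "real^'d^'d"
  assumes "pos_def S" and "l \<in> real_eigenvalues S"
  shows "0 < l"
proof -
  obtain v where v: "v \<noteq> 0" "S *v v = l *\<^sub>R v" using assms(2) real_eigenvalues_def by auto
  have "0 < v \<bullet> (S *v v)" using assms(1) v(1) unfolding pos_def_def by auto
  also have "v \<bullet> (S *v v) = l * (v \<bullet> v)" using v(2) by simp
  finally show ?thesis using v(1) inner_ge_zero[of v] by (auto simp: zero_less_mult_iff)
qed

lemma psd_form_eq_0_imp_mult_eq_0:
  fixes B :: "real^'d^'d"
  assumes sym: "sym_mat B" and nonneg: "\<And>v. 0 \<le> v \<bullet> (B *v v)" and zero: "u \<bullet> (B *v u) = 0"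
  shows "B *v u = 0"
proof (rule ccontr)
  define w where "w = B *v u"
  assume "B *v u \<noteq> 0"
  then have w_pos: "0 < w \<bullet> w" by (simp add: w_def)
  define G where "G = w \<bullet> (B *v w)"
  have "0 \<le> G" using nonneg by (simp add: G_def)
  define t where "t = (w \<bullet> w) / (G + 1)"
  have t_pos: "0 < t" using w_pos \<open>0 \<le> G\<close> by (simp add: t_def)
  \<comment> \<open>moving from u in the direction of -w would make the form negative\<close>
  have "0 \<le> (u - t *\<^sub>R w) \<bullet> (B *v (u - t *\<^sub>R w))" by (rule nonneg)
  also have "\<dots> = t\<^sup>2 * G - 2 * t * (w \<bullet> w)"
    using zero sym_mat_inner_commute[OF sym, of u w]
    by (simp add: algebra_simps inner_commute G_def w_def power2_eq_square)
  finally have "2 * (w \<bullet> w) \<le> t * G" using t_pos by (simp add: power2_eq_square algebra_simps)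
  moreover have "t * G < w \<bullet> w" unfolding t_def using w_pos \<open>0 \<le> G\<close> by (simp add: field_simps)
  ultimately show False using w_pos by simp
qed

lemma sym_mat_least_eigenvalue_ex:
  fixes S :: "real^'d^'d"
  assumes sym: "sym_mat S"
  obtains \<mu> where "\<mu> \<in> real_eigenvalues S" and "\<And>u. \<mu> * (u \<bullet> u) \<le> u \<bullet> (S *v u)"
proof -
  define f where "f u = u \<bullet> (S *v u)" for u
  have "continuous_on (sphere 0 1) f" unfolding f_def
    by (intro continuous_intros linear_continuous_on matrix_vector_mul_linear)
  moreover obtain e :: "real^'d" where "norm e = 1" using vector_choose_size[of 1] by auto
  then have "sphere (0::real^'d) 1 \<noteq> {}" by auto
  ultimately obtain u0 where u0: "u0 \<in> sphere 0 1" and min: "\<And>y. y \<in> sphere 0 1 \<Longrightarrow> f u0 \<le> f y"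
    using continuous_attains_inf[OF compact_sphere] by blast
  define \<mu> where "\<mu> = f u0"
  have bound: "\<mu> * (u \<bullet> u) \<le> f u" for u
  proof (cases "u = 0")
    case False
    then have "\<mu> \<le> f ((1 / norm u) *\<^sub>R u)" using min by (simp add: \<mu>_def)
    also have "\<dots> = f u / (norm u)\<^sup>2" by (simp add: f_def power2_eq_square algebra_simps)
    finally show ?thesis using False by (simp add: field_simps power2_norm_eq_inner)
  qed (simp add: f_def)
  \<comment> \<open>S - \<mu> I is positive semidefinite and its form vanishes at u0, so u0 is an eigenvector.\<close>
  define B where "B = S - \<mu> *\<^sub>R mat 1"
  have B: "B *v v = S *v v - \<mu> *\<^sub>R v" for v
    by (simp add: B_def algebra_simps scaleR_matrix_vector_assoc[symmetric])
  have "sym_mat B"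
    using sym by (simp add: B_def sym_mat_def transpose_def vec_eq_iff mat_def)
  moreover have "0 \<le> v \<bullet> (B *v v)" for v
    using bound[of v] by (simp add: B f_def inner_diff_right)
  moreover have "u0 \<bullet> (B *v u0) = 0"
    using u0 by (simp add: B inner_diff_right \<mu>_def f_def dot_square_norm)
  ultimately have "B *v u0 = 0" by (rule psd_form_eq_0_imp_mult_eq_0)
  then have "\<mu> \<in> real_eigenvalues S"
    using u0 unfolding real_eigenvalues_def B by (intro CollectI exI[of _ u0]) auto
  with bound show ?thesis by (intro that) (auto simp: f_def)
qed

lemma lambda_min_le_quadratic_form:
  fixes S :: "real^'d^'d"
  assumes "sym_mat S"
  shows "lambda_min S * (u \<bullet> u) \<le> u \<bullet> (S *v u)"
proof -
  obtain \<mu> where \<mu>: "\<mu> \<in> real_eigenvalues S" "\<And>u. \<mu> * (u \<bullet> u) \<le> u \<bullet> (S *v u)"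
    using sym_mat_least_eigenvalue_ex[OF assms] by blast
  have "lambda_min S \<le> \<mu>"
    unfolding lambda_min_def using finite_real_eigenvalues[OF assms] \<mu>(1) by simp
  then have "lambda_min S * (u \<bullet> u) \<le> \<mu> * (u \<bullet> u)" by (simp add: mult_right_mono)
  also have "\<dots> \<le> u \<bullet> (S *v u)" by (rule \<mu>(2))
  finally show ?thesis .
qed

lemma lambda_min_pos:
  fixes S :: "real^'d^'d"
  assumes "pos_def S"
  shows "0 < lambda_min S"
proof -
  have sym: "sym_mat S" using assms by (simp add: pos_def_def)
  then obtain \<mu> where "\<mu> \<in> real_eigenvalues S" using sym_mat_least_eigenvalue_ex by blast
  then have "lambda_min S \<in> real_eigenvalues S"
    unfolding lambda_min_def using finite_real_eigenvalues[OF sym] by (auto intro: Min_in)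
  then show ?thesis by (rule real_eigenvalue_pos[OF assms])
qed

lemma quadratic_form_le_loewner_scaleR_mat_1:
  fixes M :: "real^'d^'d"
  assumes "loewner_le M (\<beta> *\<^sub>R mat 1)"
  shows "v \<bullet> (M *v v) \<le> \<beta> * (v \<bullet> v)"
proof -
  have "0 \<le> v \<bullet> ((\<beta> *\<^sub>R mat 1 - M) *v v)"
    using assms unfolding loewner_le_def psd_def by blast
  then show ?thesis by (simp add: algebra_simps scaleR_matrix_vector_assoc[symmetric])
qed

lemma abs_bilinear_form_le_loewner:
  fixes M :: "real^'d^'d"
  assumes psd: "psd M" and le: "loewner_le M (\<beta> *\<^sub>R mat 1)" and "0 \<le> \<beta>" and "0 < c"
  shows "\<bar>a \<bullet> (M *v b)\<bar> \<le> \<beta> / 2 * (c * (a \<bullet> a) + (b \<bullet> b) / c)"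
proof -
  define r where "r = sqrt c"
  have r: "0 < r" "r\<^sup>2 = c" using \<open>0 < c\<close> by (auto simp: r_def)
  define P where "P = r *\<^sub>R a + (1 / r) *\<^sub>R b"
  define N where "N = r *\<^sub>R a - (1 / r) *\<^sub>R b"
  have sym: "sym_mat M" using psd by (simp add: psd_def)
  have "b \<bullet> (M *v a) = a \<bullet> (M *v b)"
    using sym_mat_inner_commute[OF sym, of b a] by (simp add: inner_commute)
  \<comment> \<open>polarization\<close>
  then have polar: "P \<bullet> (M *v P) - N \<bullet> (M *v N) = 4 * (a \<bullet> (M *v b))"
    using r by (simp add: P_def N_def algebra_simps)
  have PN: "P \<bullet> P + N \<bullet> N = 2 * (c * (a \<bullet> a) + (b \<bullet> b) / c)"
    using r by (simp add: P_def N_def algebra_simps power2_eq_square inner_commute)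
  have "0 \<le> P \<bullet> (M *v P)" "0 \<le> N \<bullet> (M *v N)" using psd by (simp_all add: psd_def)
  moreover have "P \<bullet> (M *v P) \<le> \<beta> * (P \<bullet> P + N \<bullet> N)" "N \<bullet> (M *v N) \<le> \<beta> * (P \<bullet> P + N \<bullet> N)"
    using quadratic_form_le_loewner_scaleR_mat_1[OF le, of P]
      quadratic_form_le_loewner_scaleR_mat_1[OF le, of N] \<open>0 \<le> \<beta>\<close>
    by (simp_all add: add_increasing add_increasing2 mult_left_mono order_trans)
  moreover have "\<beta> * (P \<bullet> P + N \<bullet> N) = 2 * (\<beta> * (c * (a \<bullet> a) + (b \<bullet> b) / c))"
    unfolding PN by simp
  ultimately show ?thesis using polar by linarith
qed

lemma lambda_min_inner_matrix_inv:
  fixes \<Sigma> :: "real^'d^'d"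
  assumes "pos_def \<Sigma>"
  shows "lambda_min \<Sigma> * ((matrix_inv \<Sigma> *v z) \<bullet> (matrix_inv \<Sigma> *v z)) \<le> z \<bullet> (matrix_inv \<Sigma> *v z)"
  using lambda_min_le_quadratic_form[of \<Sigma> "matrix_inv \<Sigma> *v z"] assms
  by (simp add: pos_def_def pos_def_mult_matrix_inv_vector inner_commute)

lemma norm_matrix_inv_le:
  fixes \<Sigma> :: "real^'d^'d"
  assumes "pos_def \<Sigma>"
  shows "norm (matrix_inv \<Sigma> *v v) \<le> norm v / lambda_min \<Sigma>"
proof -
  define w where "w = matrix_inv \<Sigma> *v v"
  have l: "0 < lambda_min \<Sigma>" by (rule lambda_min_pos[OF assms])
  have "lambda_min \<Sigma> * (norm w)\<^sup>2 \<le> w \<bullet> v"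
    using lambda_min_le_quadratic_form[of \<Sigma> w] assms
    by (simp add: w_def pos_def_def pos_def_mult_matrix_inv_vector power2_norm_eq_inner)
  also have "\<dots> \<le> norm w * norm v" by (rule norm_cauchy_schwarz)
  finally have "lambda_min \<Sigma> * norm w \<le> norm v"
    by (cases "norm w = 0") (auto simp: power2_eq_square)
  then show ?thesis using l by (simp add: w_def field_simps mult.commute)
qed

lemma frob_inner_diff_left: "frob_inner (A - B) C = frob_inner A C - frob_inner B C"
  by (simp add: frob_inner_def trace_def matrix_matrix_mult_def transpose_def sum_subtractf
      algebra_simps)

lemma frob_inner_scaleR_diff_right:
  "frob_inner A (c *\<^sub>R (B - C)) = c * (frob_inner A B - frob_inner A C)"
  by (simp add: frob_inner_def trace_def matrix_matrix_mult_def sum_subtractf sum_distrib_left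
      algebra_simps)

lemma frob_inner_outer: "frob_inner A (outer a a) = a \<bullet> (A *v a)"
  unfolding frob_inner_def
  by (simp add: trace_def outer_def matrix_matrix_mult_def matrix_vector_mult_def inner_vec_def
      transpose_def sum_distrib_left sum_distrib_right mult_ac)
     (subst sum.swap, simp add: mult_ac)

lemma frob_inner_eq_sum_axis:
  "frob_inner A B = (\<Sum>k\<in>UNIV. (A *v axis k 1) \<bullet> (B *v axis k 1))"
  by (simp add: frob_inner_def trace_def matrix_matrix_mult_def matrix_vector_mult_basis
      inner_vec_def transpose_def column_def mult_ac)

lemma frob_inner_matrix_inv_self:
  fixes \<Sigma> :: "real^'d^'d"
  assumes "pos_def \<Sigma>"
  shows "frob_inner \<Sigma> (matrix_inv \<Sigma>) = real CARD('d)"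
  using assms pos_def_matrix_inv(1)[OF assms]
  by (simp add: frob_inner_def pos_def_def sym_mat_def trace_I)

lemma sym_mat_mult_outer_mult:
  fixes S :: "real^'d^'d"
  assumes "sym_mat S"
  shows "S ** outer z z ** S = outer (S *v z) (S *v z)"
proof -
  have "transpose S = S" using assms sym_mat_def by auto
  then have "S $ j $ i = S $ i $ j" for i j by (metis transpose_def vec_lambda_beta)
  then show ?thesis
    by (simp add: vec_eq_iff outer_def matrix_matrix_mult_def matrix_vector_mult_def
        sum_distrib_left sum_distrib_right mult_ac)
qed

lemma score_eq:
  fixes \<Sigma> :: "real^'d^'d"
  assumes "pos_def \<Sigma>"
  defines "S \<equiv> matrix_inv \<Sigma>"
  shows "score \<Sigma> z M = ((S *v z) \<bullet> (M *v (S *v z)) - z \<bullet> (S *v z)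
                          - frob_inner M S + real CARD('d)) / 2"
proof -
  have "frob_inner (M - \<Sigma>) (S ** outer z z ** S) = (S *v z) \<bullet> (M *v (S *v z)) - z \<bullet> (S *v z)"
    using assms
    by (simp add: sym_mat_mult_outer_mult sym_mat_matrix_inv frob_inner_outer
        pos_def_mult_matrix_inv_vector inner_commute algebra_simps)
  moreover have "frob_inner (M - \<Sigma>) S = frob_inner M S - real CARD('d)"
    using assms by (simp add: frob_inner_diff_left frob_inner_matrix_inv_self)
  ultimately show ?thesis
    by (simp add: score_def frob_inner_scaleR_diff_right S_def)
qed

lemma abs_frob_inner_matrix_inv_le:
  fixes \<Sigma> M :: "real^'d^'d"
  assumes pd: "pos_def \<Sigma>" and psd: "psd M" and le: "loewner_le M (\<beta> *\<^sub>R mat 1)" and "0 \<le> \<beta>"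
  shows "\<bar>frob_inner M (matrix_inv \<Sigma>)\<bar> \<le> real CARD('d) * (\<beta> / lambda_min \<Sigma>)"
proof -
  define l where "l = lambda_min \<Sigma>"
  have l: "0 < l" unfolding l_def by (rule lambda_min_pos[OF pd])
  have term_le: "\<bar>(M *v e) \<bullet> (matrix_inv \<Sigma> *v e)\<bar> \<le> \<beta> / l" if "e \<bullet> e = 1" for e
  proof -
    define w where "w = matrix_inv \<Sigma> *v e"
    have "norm w \<le> 1 / l"
      using norm_matrix_inv_le[OF pd, of e] that by (simp add: w_def l_def norm_eq_sqrt_inner)
    then have "(norm w)\<^sup>2 \<le> (1 / l)\<^sup>2" by (simp add: power_mono)
    then have "w \<bullet> w \<le> 1 / l\<^sup>2" by (simp add: power2_norm_eq_inner power_divide)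
    have "(M *v e) \<bullet> w = e \<bullet> (M *v w)"
      using psd by (metis psd_def sym_mat_inner_commute)
    then have "\<bar>(M *v e) \<bullet> w\<bar> = \<bar>e \<bullet> (M *v w)\<bar>" by simp
    also have "\<dots> \<le> \<beta> / 2 * (1 / l * (e \<bullet> e) + (w \<bullet> w) / (1 / l))"
      using abs_bilinear_form_le_loewner[OF psd le \<open>0 \<le> \<beta>\<close>, of "1 / l" e w] l by simp
    also have "\<dots> \<le> \<beta> / 2 * (1 / l + 1 / l)"
    proof -
      have "(w \<bullet> w) / (1 / l) \<le> 1 / l\<^sup>2 * l"
        using mult_right_mono[OF \<open>w \<bullet> w \<le> 1 / l\<^sup>2\<close>, of l] l by simp
      then show ?thesis
        using l \<open>0 \<le> \<beta>\<close> that by (intro mult_left_mono) (simp_all add: power2_eq_square)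
    qed
    finally show ?thesis by (simp add: w_def)
  qed
  have "\<bar>frob_inner M (matrix_inv \<Sigma>)\<bar> \<le> (\<Sum>k\<in>UNIV. \<bar>(M *v axis k 1) \<bullet> (matrix_inv \<Sigma> *v axis k 1)\<bar>)"
    unfolding frob_inner_eq_sum_axis by (rule sum_abs)
  also have "\<dots> \<le> real CARD('d) * (\<beta> / l)"
    using sum_bounded_above[of UNIV "\<lambda>k. \<bar>(M *v axis k 1) \<bullet> (matrix_inv \<Sigma> *v axis k 1)\<bar>" "\<beta> / l"]
      term_le by (simp add: inner_axis_axis)
  finally show ?thesis by (simp add: l_def)
qed

lemma abs_score_le:
  fixes \<Sigma> M :: "real^'d^'d"
  assumes pd: "pos_def \<Sigma>" and psd: "psd M" and le: "loewner_le M (\<beta> *\<^sub>R mat 1)" and "0 \<le> \<beta>"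
  shows "\<bar>score \<Sigma> z M\<bar>
           \<le> (1 + \<beta> / lambda_min \<Sigma>) / 2 * (z \<bullet> (matrix_inv \<Sigma> *v z) + real CARD('d))"
proof -
  define S where "S = matrix_inv \<Sigma>"
  define l where "l = lambda_min \<Sigma>"
  define Q where "Q = z \<bullet> (S *v z)"
  define u where "u = S *v z"
  define d where "d = real CARD('d)"
  have l: "0 < l" unfolding l_def by (rule lambda_min_pos[OF pd])
  have uu: "l * (u \<bullet> u) \<le> Q"
    using lambda_min_inner_matrix_inv[OF pd] by (simp add: u_def Q_def S_def l_def)
  moreover have "0 \<le> l * (u \<bullet> u)" using l by simp
  ultimately have "0 \<le> Q" by linarith
  have "u \<bullet> (M *v u) \<le> \<beta> * (u \<bullet> u)" by (rule quadratic_form_le_loewner_scaleR_mat_1[OF le])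
  also have "\<dots> \<le> \<beta> * (Q / l)"
    using uu l \<open>0 \<le> \<beta>\<close> by (intro mult_left_mono) (simp_all add: pos_le_divide_eq mult.commute)
  finally have uMu: "u \<bullet> (M *v u) \<le> \<beta> * (Q / l)" .
  have "0 \<le> d" by (simp add: d_def)
  have "0 \<le> u \<bullet> (M *v u)" using psd by (simp add: psd_def)
  moreover have "\<bar>frob_inner M S\<bar> \<le> d * (\<beta> / l)"
    unfolding S_def l_def d_def by (rule abs_frob_inner_matrix_inv_le[OF pd psd le \<open>0 \<le> \<beta>\<close>])
  moreover have "score \<Sigma> z M = (u \<bullet> (M *v u) - Q - frob_inner M S + d) / 2"
    using score_eq[OF pd] by (simp add: u_def Q_def S_def d_def)
  ultimately have "\<bar>score \<Sigma> z M\<bar> \<le> (\<beta> * (Q / l) + Q + d * (\<beta> / l) + d) / 2"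
    using uMu \<open>0 \<le> Q\<close> \<open>0 \<le> d\<close> by (auto simp: abs_le_iff)
  also have "\<dots> = (1 + \<beta> / l) / 2 * (Q + d)" using l by (simp add: field_simps)
  finally show ?thesis by (simp add: S_def l_def Q_def d_def)
qed

lemma quadratic_form_borel_measurable [measurable]:
  fixes A :: "real^'n^'n"
  shows "(\<lambda>z. z \<bullet> (A *v z)) \<in> borel_measurable borel"
  by (intro borel_measurable_continuous_onI continuous_intros linear_continuous_on
      matrix_vector_mul_linear)

lemma nn_integral_lborel_scaleR:
  fixes f :: "'a::euclidean_space \<Rightarrow> ennreal"
  assumes [measurable]: "f \<in> borel_measurable borel" and "c \<noteq> 0"
  shows "(\<integral>\<^sup>+x. f x \<partial>lborel) = ennreal (\<bar>c\<bar> ^ DIM('a)) * (\<integral>\<^sup>+x. f (c *\<^sub>R x) \<partial>lborel)"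
  by (subst lborel_affine[OF \<open>c \<noteq> 0\<close>, of 0])
     (simp add: nn_integral_density nn_integral_distr nn_integral_cmult)

lemma mvn_density_measurable [measurable]: "mvn_density \<Sigma> \<in> borel_measurable borel"
  unfolding mvn_density_def by measurable

lemma mvn_density_mult_exp_quadratic_form:
  fixes \<Sigma> :: "real^'d^'d"
  shows "mvn_density \<Sigma> z * exp (z \<bullet> (matrix_inv \<Sigma> *v z) / 4) = mvn_density \<Sigma> ((1 / sqrt 2) *\<^sub>R z)"
proof -
  define q where "q = z \<bullet> (matrix_inv \<Sigma> *v z)"
  define N where "N = sqrt ((2 * pi) ^ CARD('d) * det \<Sigma>)"
  have "mvn_density \<Sigma> z = exp (- q / 2) / N"
    by (simp add: mvn_density_def q_def N_def)
  moreover have "mvn_density \<Sigma> ((1 / sqrt 2) *\<^sub>R z) = exp (- q / 4) / N"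
    by (simp add: mvn_density_def matrix_vector_mult_scaleR q_def N_def)
  moreover have "exp (- q / 2) * exp (q / 4) = exp (- q / 4)"
    by (simp add: mult_exp_exp)
  ultimately show ?thesis by (simp add: q_def)
qed

lemma mvn_quadratic_form_tail:
  fixes \<Sigma> :: "real^'d^'d" and X :: "'s \<Rightarrow> real^'d"
  assumes "prob_space P" and dX: "distributed P lborel X (\<lambda>z. ennreal (mvn_density \<Sigma> z))"
  shows "measure P {\<omega> \<in> space P. s \<le> X \<omega> \<bullet> (matrix_inv \<Sigma> *v X \<omega>)}
           \<le> sqrt 2 ^ CARD('d) * exp (- s / 4)"
proof -
  interpret prob_space P by fact
  define q where "q z = z \<bullet> (matrix_inv \<Sigma> *v z)" for z
  define f where "f = mvn_density \<Sigma>"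
  have [measurable]: "q \<in> borel_measurable borel" unfolding q_def by measurable
  have [measurable]: "X \<in> borel_measurable P" using distributed_measurable[OF dX] by simp
  have density_1: "(\<integral>\<^sup>+z. f z \<partial>lborel) = 1"
    using distributed_nn_integral[OF dX, of "\<lambda>_. 1"] by (simp add: f_def emeasure_space_1)
  have "emeasure P {\<omega> \<in> space P. s \<le> q (X \<omega>)}
        \<le> ennreal (exp (- (1 / 4) * s))
          * (\<integral>\<^sup>+\<omega>. ennreal (exp ((1 / 4) * q (X \<omega>))) * indicator (space P) \<omega> \<partial>P)"
    by (rule Chernoff_ineq_nn_integral_ge) auto
  also have "(\<integral>\<^sup>+\<omega>. ennreal (exp ((1 / 4) * q (X \<omega>))) * indicator (space P) \<omega> \<partial>P)
             = (\<integral>\<^sup>+\<omega>. ennreal (exp (q (X \<omega>) / 4)) \<partial>P)"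
    by (rule nn_integral_cong) simp
  also have "\<dots> = (\<integral>\<^sup>+z. f z * exp (q z / 4) \<partial>lborel)"
    using distributed_nn_integral[OF dX, of "\<lambda>z. ennreal (exp (q z / 4))"]
    by (simp add: f_def ennreal_mult'')
  also have "\<dots> = (\<integral>\<^sup>+z. f ((1 / sqrt 2) *\<^sub>R z) \<partial>lborel)"
    by (simp add: f_def q_def mvn_density_mult_exp_quadratic_form)
  also have "\<dots> = ennreal (sqrt 2 ^ CARD('d))"
    using nn_integral_lborel_scaleR[of "\<lambda>z. ennreal (f ((1 / sqrt 2) *\<^sub>R z))" "sqrt 2"] density_1
    by (simp add: f_def)
  finally have "emeasure P {\<omega> \<in> space P. s \<le> q (X \<omega>)} \<le> ennreal (sqrt 2 ^ CARD('d) * exp (- s / 4))"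
    by (simp add: ennreal_mult'[symmetric] mult.commute)
  then show ?thesis by (simp add: emeasure_eq_measure q_def)
qed

lemma sqrt2_power_mult_exp_le:
  fixes \<gamma> t :: real
  assumes "1 \<le> n" and "0 < \<gamma>" and "6 * \<gamma> * n \<le> t"
  shows "sqrt 2 ^ n * exp (- (2 * t / \<gamma> - n) / 4) \<le> exp (- t / (9 * \<gamma> * sqrt n))"
proof -
  have "sqrt 2 \<le> exp (1 / 2)"
  proof -
    have "(2::real) \<le> exp (1 / 2) ^ 2"
      using exp_ge_add_one_self[of 1] by (simp add: power2_eq_square mult_exp_exp)
    then show ?thesis by (simp add: real_le_lsqrt)
  qed
  then have "sqrt 2 ^ n \<le> exp (n / 2)"
    using power_mono[of "sqrt 2" "exp (1 / 2)" n] by (simp add: exp_of_nat_mult[symmetric])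
  then have "sqrt 2 ^ n * exp (- (2 * t / \<gamma> - n) / 4) \<le> exp (n / 2) * exp (- (2 * t / \<gamma> - n) / 4)"
    by (simp add: mult_right_mono)
  also have "\<dots> = exp (3 * n / 4 - (t / \<gamma>) / 2)" by (simp add: mult_exp_exp field_simps)
  also have "\<dots> \<le> exp (- t / (9 * \<gamma> * sqrt n))"
  proof -
    have "0 \<le> 6 * \<gamma> * n" using assms by simp
    then have "0 \<le> t" using assms by linarith
    then have "t / (9 * \<gamma> * sqrt n) \<le> t / (9 * \<gamma>)"
      using assms by (intro divide_left_mono) auto
    moreover have "6 * n \<le> t / \<gamma>" using assms by (simp add: field_simps)
    ultimately show ?thesis by simp
  qed
  finally show ?thesis .
qed

lemma nn_integral_exp_tail:
  assumes "0 < c"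
  shows "(\<integral>\<^sup>+t\<in>{T..}. ennreal (exp (- t / c)) \<partial>lborel) = ennreal (c * exp (- T / c))"
proof -
  have int: "((\<lambda>t. exp (- t / c)) has_integral c * exp (- T / c)) {T..}"
    using has_integral_exp_minus_to_infinity[of "1 / c" T] assms by (simp add: mult.commute)
  have eq: "(\<lambda>t. exp (- t / c) * indicator {T..} t) = (\<lambda>t. if t \<in> {T..} then exp (- t / c) else 0)"
    by (auto simp: indicator_def)
  have int_UNIV: "((\<lambda>t. exp (- t / c) * indicator {T..} t) has_integral c * exp (- T / c)) UNIV"
    unfolding eq has_integral_restrict_UNIV by (rule int)
  have "(\<integral>\<^sup>+t\<in>{T..}. ennreal (exp (- t / c)) \<partial>lborel)
        = (\<integral>\<^sup>+t. ennreal (exp (- t / c) * indicator {T..} t) \<partial>lborel)"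
    by (rule nn_integral_cong) (simp add: indicator_def)
  also have "\<dots> = ennreal (c * exp (- T / c))"
    by (rule nn_integral_has_integral_lborel[OF _ _ int_UNIV]) auto
  finally show ?thesis .
qed

lemma score_tail_prob_le:
  fixes \<Sigma> :: "real^'d^'d" and X :: "'s \<Rightarrow> real^'d" and M :: "'s \<Rightarrow> real^'d^'d"
  assumes "prob_space P" and pd: "pos_def \<Sigma>"
    and dX: "distributed P lborel X (\<lambda>z. ennreal (mvn_density \<Sigma> z))"
    and "0 \<le> \<beta>" and psd: "\<And>\<omega>. psd (M \<omega>)" and le: "\<And>\<omega>. loewner_le (M \<omega>) (\<beta> *\<^sub>R mat 1)"
    and \<gamma>: "\<gamma> = 1 + \<beta> / lambda_min \<Sigma>" and t: "6 * \<gamma> * CARD('d) \<le> t"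
  shows "measure P {\<omega> \<in> space P. t \<le> \<bar>score \<Sigma> (X \<omega>) (M \<omega>)\<bar>}
           \<le> exp (- t / (9 * \<gamma> * sqrt CARD('d)))"
proof -
  interpret prob_space P by fact
  define d where "d = real CARD('d)"
  define s where "s = 2 * t / \<gamma> - d"
  have "0 < \<gamma>" using \<gamma> lambda_min_pos[OF pd] \<open>0 \<le> \<beta>\<close> by (simp add: add_pos_nonneg)
  have [measurable]: "X \<in> borel_measurable P" using distributed_measurable[OF dX] by simp
  have "{\<omega> \<in> space P. t \<le> \<bar>score \<Sigma> (X \<omega>) (M \<omega>)\<bar>}
        \<subseteq> {\<omega> \<in> space P. s \<le> X \<omega> \<bullet> (matrix_inv \<Sigma> *v X \<omega>)}"
  proof safe
    fix \<omega> assume "t \<le> \<bar>score \<Sigma> (X \<omega>) (M \<omega>)\<bar>"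
    also have "\<dots> \<le> \<gamma> / 2 * (X \<omega> \<bullet> (matrix_inv \<Sigma> *v X \<omega>) + d)"
      using abs_score_le[OF pd psd le \<open>0 \<le> \<beta>\<close>] \<gamma> by (simp add: d_def)
    finally show "s \<le> X \<omega> \<bullet> (matrix_inv \<Sigma> *v X \<omega>)"
      using \<open>0 < \<gamma>\<close> by (simp add: s_def field_simps)
  qed
  then have "measure P {\<omega> \<in> space P. t \<le> \<bar>score \<Sigma> (X \<omega>) (M \<omega>)\<bar>}
             \<le> measure P {\<omega> \<in> space P. s \<le> X \<omega> \<bullet> (matrix_inv \<Sigma> *v X \<omega>)}"
    by (rule finite_measure_mono) measurable
  also have "\<dots> \<le> sqrt 2 ^ CARD('d) * exp (- s / 4)"
    by (rule mvn_quadratic_form_tail[OF \<open>prob_space P\<close> dX])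
  also have "\<dots> \<le> exp (- t / (9 * \<gamma> * sqrt CARD('d)))"
    unfolding s_def d_def by (rule sqrt2_power_mult_exp_le) (use t \<open>0 < \<gamma>\<close> in auto)
  finally show ?thesis .
qed

theorem lemma8:
  fixes P :: "'s measure"
    and \<Sigma> :: "real^'d^'d"
    and n :: nat
    and x :: "nat \<Rightarrow> 's \<Rightarrow> real^'d"
    and R :: "'r measure"
    and U :: "'s \<Rightarrow> 'r"
    and mech :: "(nat \<Rightarrow> real^'d) \<Rightarrow> 'r \<Rightarrow> real^'d^'d"
    and \<beta>u \<gamma> T :: real
    and i :: nat
  assumes "prob_space P"
    and "pos_def \<Sigma>"
    and "\<And>j. j < n \<Longrightarrow> distributed P lborel (x j) (\<lambda>z. ennreal (mvn_density \<Sigma> z))"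
    and "prob_space.indep_vars P (\<lambda>_. borel) x {..<n}"
    and "U \<in> P \<rightarrow>\<^sub>M R"
    and "\<And>A B. A \<in> sets (PiM {..<n} (\<lambda>_. borel)) \<Longrightarrow> B \<in> sets R \<Longrightarrow>
           measure P {\<omega> \<in> space P. (\<lambda>j\<in>{..<n}. x j \<omega>) \<in> A \<and> U \<omega> \<in> B}
           = measure P {\<omega> \<in> space P. (\<lambda>j\<in>{..<n}. x j \<omega>) \<in> A} * measure P {\<omega> \<in> space P. U \<omega> \<in> B}"
    and "(\<lambda>(xs, r). mech xs r) \<in> (PiM {..<n} (\<lambda>_. borel)) \<Otimes>\<^sub>M R \<rightarrow>\<^sub>M borel"
    and "\<beta>u > 0"
    and "\<And>xs r. psd (mech xs r) \<and> loewner_le (mech xs r) (\<beta>u *\<^sub>R mat 1)"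
    and "\<gamma> = 1 + \<beta>u / lambda_min \<Sigma>"
    and "i < n"
    and "T \<ge> 6 * \<gamma> * real CARD('d) powr (3/2)"
  shows "(\<integral>\<^sup>+ t \<in> {T..}.
            ennreal (measure P {\<omega> \<in> space P.
               \<bar>score \<Sigma> (x i \<omega>) (mech (\<lambda>j\<in>{..<n}. x j \<omega>) (U \<omega>))\<bar> \<ge> t}) \<partial>lborel)
         \<le> ennreal (9 * \<gamma> * sqrt (real CARD('d)) * exp (- T / (9 * \<gamma> * sqrt (real CARD('d)))))"
proof -
  \<comment> \<open>The score bound is pointwise in the mechanism's output.\<close>
  define d where "d = real CARD('d)"
  define c where "c = 9 * \<gamma> * sqrt d"
  have "0 < \<gamma>" using assms(8,10) lambda_min_pos[OF assms(2)] by (simp add: add_pos_nonneg)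
  then have "0 < c" by (simp add: c_def d_def)
  have "d \<le> d powr (3/2)" using powr_mono[of 1 "3/2" d] by (simp add: d_def)
  then have "6 * \<gamma> * d \<le> 6 * \<gamma> * d powr (3/2)" using \<open>0 < \<gamma>\<close> by simp
  with assms(12) have T: "6 * \<gamma> * d \<le> T" by (simp add: d_def)
  have "(\<integral>\<^sup>+t\<in>{T..}. ennreal (measure P {\<omega> \<in> space P.
            \<bar>score \<Sigma> (x i \<omega>) (mech (\<lambda>j\<in>{..<n}. x j \<omega>) (U \<omega>))\<bar> \<ge> t}) \<partial>lborel)
        \<le> (\<integral>\<^sup>+t\<in>{T..}. ennreal (exp (- t / c)) \<partial>lborel)"
    using score_tail_prob_le[OF assms(1,2) assms(3)[OF assms(11)], of \<beta>u
        "\<lambda>\<omega>. mech (\<lambda>j\<in>{..<n}. x j \<omega>) (U \<omega>)" \<gamma>] assms(8,9,10) T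
    by (intro nn_integral_mono) (auto simp: indicator_def c_def d_def)
  also have "\<dots> = ennreal (c * exp (- T / c))" by (rule nn_integral_exp_tail[OF \<open>0 < c\<close>])
  finally show ?thesis by (simp add: c_def d_def)
qed

end
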